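(* Assume the setting described in the context and the initial-data bound $\|(\phi,\varpi_2)(\cdot,0)\|_{L^1(\mathbb{T}\times\mathbb{R})}\le C\mu^\alpha$ (with $\mu$ small, $\alpha>\frac{11}3$, and $\lambda+\mu$ of the same order as $\mu$). Then for $i=1,2$, all integers $k\ge0$, all $p\ge1$ and all $t\ge0$, $$\|\partial_y^k\theta_i(\cdot,t)\|_{L^p(\mathbb{R})}\lesssim\mu^\alpha[\bar\mu(1+t)]^{-\frac12+\frac1{2p}-\frac k2}.$$
   Context: Setting: $\mathbb{T}=\mathbb{R}/\mathbb{Z}$; $\rho=1+\phi$ is the density and $\boldsymbol m=(y,0)+\varpi$, $\varpi=(\varpi_1,\varpi_2)$, the momentum of a perturbation of the Couette flow for the 2-D compressible Navier–Stokes equations on $\mathbb{T}\times\mathbb{R}$ with Mach number $M>0$, viscosities $\mu>0$, $\lambda+\mu\ge0$ and smooth pressure $P$, $P'(1)=1$. Zero mode $\mathring f(y)=\int_{\mathbb{T}}f\,dx$. Constants: $\bar\mu=2\mu+\lambda$, $\bar c=1/M$, $a=2/(P''(1)\bar c+2\bar c)$. Let $w=(\mathring\phi,\mathring\varpi_2)^T$, $l_1=\frac1{2a}(-1,\frac1{\bar c})$, $l_2=\frac1{2a}(1,\frac1{\bar c})$, $\eta_i=l_i\int_{\mathbb{R}}w(y,0)\,dy$. Diffusion waves: $\theta_1(y,t)=\frac{\bar\mu^{1/2}}{\sqrt{2(1+t)}}\Gamma_1\big(\frac{y+\bar c(1+t)}{\sqrt{2\bar\mu(1+t)}}\big)$,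 $\theta_2(y,t)=\frac{\bar\mu^{1/2}}{\sqrt{2(1+t)}}\Gamma_2\big(\frac{y-\bar c(1+t)}{\sqrt{2\bar\mu(1+t)}}\big)$, $\Gamma_i(z)=\frac{(e^{\eta_i/\bar\mu}-1)e^{-z^2}}{\sqrt\pi+(e^{\eta_i/\bar\mu}-1)\int_z^\infty e^{-\xi^2}d\xi}$. The notation $A\lesssim B$ means $A\le C'B$ with $C'$ possibly depending on $M$ but independent of $\mu$, $\lambda+\mu$ and $t$. *)

theory Defs
  imports "HOL-Analysis.Analysis"
begin

text \<open>Functions on T x R are represented as 1-periodic-in-x functions real => real => real;
  integrals over T are integrals over [0,1].\<close>

definition zero_mode :: "(real \<Rightarrow> real \<Rightarrow> real) \<Rightarrow> real \<Rightarrow> real" where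
  "zero_mode f y = (LINT x:{0..1}|lborel. f x y)"

definition L1_TR :: "(real \<Rightarrow> real \<Rightarrow> real) \<Rightarrow> real" where
  "L1_TR f = (LINT z:({0..1} \<times> UNIV)|lborel. \<bar>f (fst z) (snd z)\<bar>)"

definition total_mass :: "(real \<Rightarrow> real \<Rightarrow> real) \<Rightarrow> real" where
  "total_mass f = (LINT y|lborel. zero_mode f y)"

text \<open>a = 2 / (P''(1) cbar + 2 cbar)\<close>
definition a_const :: "real \<Rightarrow> real \<Rightarrow> real" where
  "a_const P2 cbar = 2 / (P2 * cbar + 2 * cbar)"

text \<open>eta_i = l_i . int w(y,0) dy with l_1 = (-1, 1/cbar)/(2a), l_2 = (1, 1/cbar)/(2a)\<close>
definition eta :: "nat \<Rightarrow> real \<Rightarrow> real \<Rightarrow> real \<Rightarrow> real \<Rightarrow> real" where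
  "eta i a cbar m_phi m_w =
     (if i = 1 then (1 / (2 * a)) * (- m_phi + m_w / cbar)
      else (1 / (2 * a)) * (m_phi + m_w / cbar))"

definition gauss_tail :: "real \<Rightarrow> real" where
  "gauss_tail z = (LBINT \<xi>=ereal z..\<infinity>. exp (- \<xi>\<^sup>2))"

definition Gamma_dw :: "real \<Rightarrow> real \<Rightarrow> real \<Rightarrow> real" where
  "Gamma_dw et mubar z =
     (exp (et / mubar) - 1) * exp (- z\<^sup>2) / (sqrt pi + (exp (et / mubar) - 1) * gauss_tail z)"

definition theta :: "nat \<Rightarrow> real \<Rightarrow> real \<Rightarrow> real \<Rightarrow> real \<Rightarrow> real \<Rightarrow> real" where
  "theta i et mubar cbar y t =
     sqrt mubar / sqrt (2 * (1 + t)) *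
     Gamma_dw et mubar ((y + (if i = 1 then 1 else -1) * cbar * (1 + t)) / sqrt (2 * mubar * (1 + t)))"

end

theory Submission
  imports Defs "HOL-Probability.Probability"
begin

text \<open>With \<open>s = exp (\<eta>\<^sub>i / \<mu>bar) - 1\<close> and \<open>L = sqrt (2 \<mu>bar (1 + t))\<close>, the wave \<open>\<theta>\<^sub>i\<close> is
  \<open>\<mu>bar / L\<close> times the profile \<open>G\<^sub>s z = s exp (- z\<^sup>2) / (sqrt pi + s gauss_tail z)\<close>
  evaluated at \<open>(y \<plusminus> cbar (1 + t)) / L\<close>. The profile solves the Riccati equation
  \<open>G' = G\<^sup>2 - 2 z G\<close>, so its \<open>k\<close>-th derivative is a sum of terms \<open>q(z) G^(j+1)\<close> with polynomials
  \<open>q\<close> independent of \<open>s\<close>; since the denominator stays above \<open>sqrt pi / 2\<close> when \<open>|s| \<le> 1/2\<close>,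
  that derivative is bounded by \<open>K\<^sub>k |s| exp (- z\<^sup>2 / 2)\<close>. Rescaling turns this into the factor
  \<open>\<mu>bar L^(-k-1)\<close> for the sup norm and \<open>\<mu>bar L^(1/p-k-1)\<close> for the \<open>L\<^sup>p\<close> norm. Finally
  \<open>\<mu>bar |s| \<le> 2 |\<eta>\<^sub>i|\<close>, and \<open>|\<eta>\<^sub>i|\<close> is bounded by the \<open>L\<^sup>1\<close> norm of the data, hence by
  \<open>C \<mu>^\<alpha>\<close>; the smallness \<open>|s| \<le> 1/2\<close> holds as soon as \<open>\<mu>^(\<alpha>-1)\<close> is small.\<close>

lemma has_bochner_integral_exp_neg_square:
  "has_bochner_integral lborel (\<lambda>x::real. exp (- x\<^sup>2)) (sqrt pi)"
  using has_bochner_integral_even_function[OF gaussian_moment_even_pos[where k=0]] by simp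

lemma integrable_exp_neg_square: "integrable lborel (\<lambda>x::real. exp (- x\<^sup>2))"
  using has_bochner_integral_exp_neg_square by (auto simp: has_bochner_integral_iff)

lemma integral_exp_neg_square: "(\<integral>x. exp (- x\<^sup>2) \<partial>lborel) = sqrt pi"
  using has_bochner_integral_exp_neg_square by (auto simp: has_bochner_integral_iff)

lemma exp_neg_square_half_eq: "(\<lambda>x. exp (- x\<^sup>2 / 2)) = (\<lambda>x. sqrt (2 * pi) * std_normal_density x)"
  by (simp add: std_normal_density_def fun_eq_iff)

lemma integrable_exp_neg_square_half: "integrable lborel (\<lambda>x::real. exp (- x\<^sup>2 / 2))"
  unfolding exp_neg_square_half_eq by (intro integrable_mult_right) simp

lemma integral_exp_neg_square_half: "(\<integral>x. exp (- x\<^sup>2 / 2) \<partial>lborel) = sqrt (2 * pi)"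
  unfolding exp_neg_square_half_eq by simp

lemma gauss_tail_eq_integral: "gauss_tail z = (\<integral>x. indicator {z<..} x * exp (- x\<^sup>2) \<partial>lborel)"
  unfolding gauss_tail_def interval_lebesgue_integral_def set_lebesgue_integral_def
  by (simp add: einterval_def greaterThan_def)

lemma gauss_tail_nonneg: "0 \<le> gauss_tail z"
  unfolding gauss_tail_eq_integral by (rule integral_nonneg_AE) (auto simp: indicator_def)

lemma integrable_indicator_mult_exp_neg_square:
  "A \<in> sets lborel \<Longrightarrow> integrable lborel (\<lambda>x::real. indicator A x * exp (- x\<^sup>2))"
  using integrable_mult_indicator[OF _ integrable_exp_neg_square] by simp

lemma gauss_tail_le_sqrt_pi: "gauss_tail z \<le> sqrt pi"
proof -
  have "gauss_tail z \<le> (\<integral>x. exp (- x\<^sup>2) \<partial>lborel)"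
    unfolding gauss_tail_eq_integral
    by (intro integral_mono integrable_indicator_mult_exp_neg_square integrable_exp_neg_square)
      (auto simp: indicator_def)
  then show ?thesis
    by (simp add: integral_exp_neg_square)
qed

lemma has_real_derivative_gauss_tail: "(gauss_tail has_real_derivative - exp (- z\<^sup>2)) (at z)"
proof -
  define f where "f = (\<lambda>x::real. exp (- x\<^sup>2))"
  define a where "a = z - 1"
  have "interval_lebesgue_integrable lborel A B f" for A B
    unfolding interval_lebesgue_integrable_def set_integrable_def f_def
    by (auto intro!: integrable_indicator_mult_exp_neg_square)
  then have "gauss_tail u = (LBINT x=ereal a..\<infinity>. f x) - (LBINT x=ereal a..ereal u. f x)" for u
    using interval_integral_sum[of "ereal a" "ereal u" "\<infinity>" f]
    unfolding gauss_tail_def f_def by simp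
  then have split: "gauss_tail = (\<lambda>u. (LBINT x=ereal a..\<infinity>. f x) - (LBINT x=ereal a..ereal u. f x))"
    by (simp add: fun_eq_iff)
  have "((\<lambda>u. LBINT x=a..u. f x) has_vector_derivative f z) (at z within {a..z+1})"
    unfolding f_def
    by (rule interval_integral_FTC2)
      (simp_all add: a_def continuous_on_exp continuous_on_minus continuous_on_power continuous_on_id)
  then have "((\<lambda>u. LBINT x=a..u. f x) has_real_derivative f z) (at z)"
    by (simp add: at_within_Icc_at a_def has_real_derivative_iff_has_vector_derivative)
  then show ?thesis
    unfolding split f_def by (auto intro!: derivative_eq_intros)
qed

definition dw_profile :: "real \<Rightarrow> real \<Rightarrow> real" where
  "dw_profile s z = s * exp (- z\<^sup>2) / (sqrt pi + s * gauss_tail z)"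

lemma Gamma_dw_eq_dw_profile: "Gamma_dw et mubar = dw_profile (exp (et / mubar) - 1)"
  by (simp add: fun_eq_iff Gamma_dw_def dw_profile_def)

lemma dw_profile_denominator_ge:
  assumes "\<bar>s\<bar> \<le> 1/2"
  shows "sqrt pi / 2 \<le> sqrt pi + s * gauss_tail z"
proof -
  have "\<bar>s * gauss_tail z\<bar> \<le> 1/2 * sqrt pi"
    unfolding abs_mult using gauss_tail_nonneg[of z] gauss_tail_le_sqrt_pi[of z] assms
    by (intro mult_mono) auto
  then show ?thesis
    by linarith
qed

lemma abs_dw_profile_le:
  assumes "\<bar>s\<bar> \<le> 1/2"
  shows "\<bar>dw_profile s z\<bar> \<le> 2 / sqrt pi * \<bar>s\<bar> * exp (- z\<^sup>2)"
proof -
  have den: "sqrt pi / 2 \<le> sqrt pi + s * gauss_tail z"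
    by (rule dw_profile_denominator_ge[OF assms])
  moreover have "0 < sqrt pi"
    by simp
  ultimately have pos: "0 < sqrt pi + s * gauss_tail z"
    by linarith
  then have "\<bar>dw_profile s z\<bar> = \<bar>s\<bar> * exp (- z\<^sup>2) / (sqrt pi + s * gauss_tail z)"
    unfolding dw_profile_def by (simp add: abs_mult)
  also have "\<dots> \<le> \<bar>s\<bar> * exp (- z\<^sup>2) / (sqrt pi / 2)"
    using den pos by (intro divide_left_mono) auto
  finally show ?thesis
    by (simp add: field_simps)
qed

lemma abs_dw_profile_le_one:
  assumes "\<bar>s\<bar> \<le> 1/2"
  shows "\<bar>dw_profile s z\<bar> \<le> 1"
proof -
  have "2 / sqrt pi * \<bar>s\<bar> * exp (- z\<^sup>2) \<le> 2 / sqrt pi * (1/2) * 1"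
    using assms by (intro mult_mono) auto
  also have "\<dots> \<le> 1"
    using pi_gt3 by (simp add: real_le_rsqrt)
  finally show ?thesis
    using abs_dw_profile_le[OF assms, of z] by linarith
qed

lemma has_real_derivative_dw_profile:
  assumes "\<bar>s\<bar> \<le> 1/2"
  shows "(dw_profile s has_real_derivative (dw_profile s z)\<^sup>2 - 2 * z * dw_profile s z) (at z)"
proof -
  let ?D = "sqrt pi + s * gauss_tail z"
  have "sqrt pi / 2 \<le> ?D" "0 < sqrt pi"
    using dw_profile_denominator_ge[OF assms] by auto
  then have pos: "0 < ?D"
    by linarith
  have num: "((\<lambda>z. s * exp (- z\<^sup>2)) has_real_derivative s * (exp (- z\<^sup>2) * - (2 * z))) (at z)"
    by (auto intro!: derivative_eq_intros)
  have den: "((\<lambda>z. sqrt pi + s * gauss_tail z) has_real_derivative 0 + s * - exp (- z\<^sup>2)) (at z)"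
    by (intro DERIV_add DERIV_const DERIV_cmult has_real_derivative_gauss_tail)
  have "(dw_profile s has_real_derivative
      (s * (exp (- z\<^sup>2) * - (2 * z)) * ?D - s * exp (- z\<^sup>2) * (0 + s * - exp (- z\<^sup>2))) / (?D * ?D)) (at z)"
    unfolding dw_profile_def[abs_def] using pos by (intro DERIV_divide num den) simp
  moreover have "(s * (e * - (2 * z)) * D - s * e * (0 + s * - e)) / (D * D) = (s * e / D)\<^sup>2 - 2 * z * (s * e / D)"
    if "D \<noteq> 0" for D e :: real
    using that by (simp add: field_simps power2_eq_square)
  ultimately show ?thesis
    unfolding dw_profile_def using pos by auto
qed

definition poly_profile_comb :: "real \<Rightarrow> (real poly \<times> nat) list \<Rightarrow> real \<Rightarrow> real" where
  "poly_profile_comb s xs z = (\<Sum>(q, j)\<leftarrow>xs. poly q z * dw_profile s z ^ Suc j)"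

lemma poly_profile_comb_Nil [simp]: "poly_profile_comb s [] z = 0"
  by (simp add: poly_profile_comb_def)

lemma poly_profile_comb_Cons [simp]:
  "poly_profile_comb s ((q, j) # xs) z = poly q z * dw_profile s z ^ Suc j + poly_profile_comb s xs z"
  by (simp add: poly_profile_comb_def)

lemma poly_profile_comb_has_derivative:
  "\<exists>ys. \<forall>s z. \<bar>s\<bar> \<le> 1/2 \<longrightarrow>
     (poly_profile_comb s xs has_real_derivative poly_profile_comb s ys z) (at z)"
proof (induction xs)
  case Nil
  show ?case
    by (intro exI[of _ "[]"]) (simp add: poly_profile_comb_def[abs_def])
next
  case (Cons x xs)
  obtain q j where x: "x = (q, j)"
    by fastforce
  obtain ys where ys: "\<forall>s z. \<bar>s\<bar> \<le> 1/2 \<longrightarrow>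
      (poly_profile_comb s xs has_real_derivative poly_profile_comb s ys z) (at z)"
    using Cons.IH by blast
  \<comment> \<open>\<open>(q G^(j+1))' = (q' - 2 (j+1) z q) G^(j+1) + (j+1) q G^(j+2)\<close> by the Riccati equation\<close>
  let ?zs = "(pderiv q - smult (2 * real (Suc j)) (pCons 0 q), j) # (smult (real (Suc j)) q, Suc j) # ys"
  have "(poly_profile_comb s (x # xs) has_real_derivative poly_profile_comb s ?zs z) (at z)"
    if s: "\<bar>s\<bar> \<le> 1/2" for s z
  proof -
    let ?G = "dw_profile s z"
    let ?D = "poly q z * ((1 + real j) * ((?G\<^sup>2 - 2 * z * ?G) * ?G ^ j)) + poly (pderiv q) z * ?G ^ Suc j"
    have eq: "poly_profile_comb s (x # xs) = (\<lambda>z. poly q z * dw_profile s z ^ Suc j + poly_profile_comb s xs z)"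
      by (simp add: x fun_eq_iff)
    have "((\<lambda>z. poly q z * dw_profile s z ^ Suc j) has_real_derivative ?D) (at z)"
      by (intro DERIV_mult' poly_DERIV DERIV_power_Suc has_real_derivative_dw_profile s)
    then have "(poly_profile_comb s (x # xs) has_real_derivative ?D + poly_profile_comb s ys z) (at z)"
      unfolding eq using ys s by (intro DERIV_add) auto
    moreover have "?D + poly_profile_comb s ys z = poly_profile_comb s ?zs z"
      by (simp add: algebra_simps power2_eq_square)
    ultimately show ?thesis
      by (rule DERIV_cong)
  qed
  then show ?case
    by blast
qed

lemma higher_deriv_dw_profile_eq_comb:
  "\<exists>xs. \<forall>s. \<bar>s\<bar> \<le> 1/2 \<longrightarrow> (deriv ^^ k) (dw_profile s) = poly_profile_comb s xs"
proof (induction k)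
  case 0
  show ?case
    by (intro exI[of _ "[(1, 0)]"]) (simp add: fun_eq_iff)
next
  case (Suc k)
  then obtain xs where xs: "\<forall>s. \<bar>s\<bar> \<le> 1/2 \<longrightarrow> (deriv ^^ k) (dw_profile s) = poly_profile_comb s xs"
    by blast
  obtain ys where ys: "\<forall>s z. \<bar>s\<bar> \<le> 1/2 \<longrightarrow>
      (poly_profile_comb s xs has_real_derivative poly_profile_comb s ys z) (at z)"
    using poly_profile_comb_has_derivative by blast
  have "(deriv ^^ Suc k) (dw_profile s) = poly_profile_comb s ys" if s: "\<bar>s\<bar> \<le> 1/2" for s
  proof -
    have "(deriv ^^ Suc k) (dw_profile s) = deriv (poly_profile_comb s xs)"
      using xs s by simp
    also have "\<dots> = poly_profile_comb s ys"
      using ys s by (intro ext DERIV_imp_deriv) blast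
    finally show ?thesis .
  qed
  then show ?case
    by blast
qed

lemma has_real_derivative_higher_deriv_dw_profile:
  assumes "\<bar>s\<bar> \<le> 1/2"
  shows "((deriv ^^ k) (dw_profile s) has_real_derivative (deriv ^^ Suc k) (dw_profile s) z) (at z)"
proof -
  obtain xs where xs: "(deriv ^^ k) (dw_profile s) = poly_profile_comb s xs"
    using higher_deriv_dw_profile_eq_comb assms by blast
  obtain ys where ys: "(poly_profile_comb s xs has_real_derivative poly_profile_comb s ys z) (at z)"
    using poly_profile_comb_has_derivative assms by blast
  moreover from ys have "deriv (poly_profile_comb s xs) z = poly_profile_comb s ys z"
    by (rule DERIV_imp_deriv)
  ultimately show ?thesis
    using xs by simp
qed

lemma abs_poly_profile_comb_le:
  assumes "\<bar>s\<bar> \<le> 1/2"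
  shows "\<bar>poly_profile_comb s xs z\<bar> \<le> (\<Sum>(q, j)\<leftarrow>xs. \<bar>poly q z\<bar>) * \<bar>dw_profile s z\<bar>"
proof (induction xs)
  case Nil
  show ?case
    by simp
next
  case (Cons x xs)
  obtain q j where x: "x = (q, j)"
    by fastforce
  have "\<bar>dw_profile s z\<bar> ^ j \<le> 1"
    using abs_dw_profile_le_one[OF assms] by (simp add: power_le_one)
  then have head: "\<bar>poly q z * dw_profile s z ^ Suc j\<bar> \<le> \<bar>poly q z\<bar> * \<bar>dw_profile s z\<bar>"
    by (simp add: abs_mult power_abs mult_left_le mult.assoc mult_left_mono)
  have "\<bar>poly_profile_comb s (x # xs) z\<bar> \<le> \<bar>poly q z * dw_profile s z ^ Suc j\<bar> + \<bar>poly_profile_comb s xs z\<bar>"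
    by (simp add: x abs_triangle_ineq)
  also have "\<dots> \<le> \<bar>poly q z\<bar> * \<bar>dw_profile s z\<bar> + (\<Sum>(q, j)\<leftarrow>xs. \<bar>poly q z\<bar>) * \<bar>dw_profile s z\<bar>"
    using head Cons.IH by (rule add_mono)
  also have "\<dots> = (\<Sum>(q, j)\<leftarrow>x # xs. \<bar>poly q z\<bar>) * \<bar>dw_profile s z\<bar>"
    by (simp add: x distrib_right)
  finally show ?case .
qed

lemma abs_power_mult_exp_le: "\<bar>z::real\<bar> ^ i * exp (- z\<^sup>2 / 2) \<le> exp (real i ^ 2 / 2)"
proof -
  have "\<bar>z\<bar> \<le> exp \<bar>z\<bar>"
    using exp_ge_add_one_self[of "\<bar>z\<bar>"] by linarith
  then have "\<bar>z\<bar> ^ i \<le> exp \<bar>z\<bar> ^ i"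
    by (intro power_mono) auto
  then have "\<bar>z\<bar> ^ i * exp (- z\<^sup>2 / 2) \<le> exp \<bar>z\<bar> ^ i * exp (- z\<^sup>2 / 2)"
    by (intro mult_right_mono) auto
  also have "\<dots> = exp (real i * \<bar>z\<bar> - z\<^sup>2 / 2)"
    by (simp add: exp_of_nat_mult[symmetric] mult_exp_exp)
  also have "\<dots> \<le> exp (real i ^ 2 / 2)"
    using zero_le_power2[of "\<bar>z\<bar> - real i"] by (simp add: power2_eq_square algebra_simps)
  finally show ?thesis .
qed

lemma abs_poly_mult_exp_le:
  "\<bar>poly q z\<bar> * exp (- z\<^sup>2 / 2) \<le> (\<Sum>i\<le>degree q. \<bar>coeff q i\<bar> * exp (real i ^ 2 / 2))"
proof -
  have "\<bar>poly q z\<bar> \<le> (\<Sum>i\<le>degree q. \<bar>coeff q i\<bar> * \<bar>z\<bar> ^ i)"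
    unfolding poly_altdef by (rule order_trans[OF sum_abs]) (simp add: abs_mult power_abs)
  then have "\<bar>poly q z\<bar> * exp (- z\<^sup>2 / 2) \<le> (\<Sum>i\<le>degree q. \<bar>coeff q i\<bar> * \<bar>z\<bar> ^ i) * exp (- z\<^sup>2 / 2)"
    by (intro mult_right_mono) auto
  also have "\<dots> = (\<Sum>i\<le>degree q. \<bar>coeff q i\<bar> * (\<bar>z\<bar> ^ i * exp (- z\<^sup>2 / 2)))"
    by (simp add: sum_distrib_right mult.assoc)
  also have "\<dots> \<le> (\<Sum>i\<le>degree q. \<bar>coeff q i\<bar> * exp (real i ^ 2 / 2))"
    by (intro sum_mono mult_left_mono abs_power_mult_exp_le) auto
  finally show ?thesis .
qed

lemma higher_deriv_dw_profile_bound: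
  "\<exists>K>0. \<forall>s z. \<bar>s\<bar> \<le> 1/2 \<longrightarrow> \<bar>(deriv ^^ k) (dw_profile s) z\<bar> \<le> K * \<bar>s\<bar> * exp (- z\<^sup>2 / 2)"
proof -
  obtain xs where xs: "\<forall>s. \<bar>s\<bar> \<le> 1/2 \<longrightarrow> (deriv ^^ k) (dw_profile s) = poly_profile_comb s xs"
    using higher_deriv_dw_profile_eq_comb by blast
  define B where "B = (\<Sum>(q, j)\<leftarrow>xs. \<Sum>i\<le>degree q. \<bar>coeff q i\<bar> * exp (real i ^ 2 / 2))"
  have B: "(\<Sum>(q, j)\<leftarrow>xs. \<bar>poly q z\<bar>) * exp (- z\<^sup>2 / 2) \<le> B" for z
    unfolding B_def sum_list_mult_const[symmetric]
    using abs_poly_mult_exp_le[of _ z] by (intro sum_list_mono) auto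
  have "\<bar>(deriv ^^ k) (dw_profile s) z\<bar> \<le> 2 / sqrt pi * (B + 1) * \<bar>s\<bar> * exp (- z\<^sup>2 / 2)"
    if s: "\<bar>s\<bar> \<le> 1/2" for s z
  proof -
    have "\<bar>(deriv ^^ k) (dw_profile s) z\<bar> \<le> (\<Sum>(q, j)\<leftarrow>xs. \<bar>poly q z\<bar>) * \<bar>dw_profile s z\<bar>"
      using xs s abs_poly_profile_comb_le by simp
    also have "\<dots> \<le> (\<Sum>(q, j)\<leftarrow>xs. \<bar>poly q z\<bar>) * (2 / sqrt pi * \<bar>s\<bar> * exp (- z\<^sup>2))"
      by (intro mult_left_mono abs_dw_profile_le s sum_list_nonneg) auto
    also have "\<dots> = 2 / sqrt pi * \<bar>s\<bar> * exp (- z\<^sup>2 / 2) * ((\<Sum>(q, j)\<leftarrow>xs. \<bar>poly q z\<bar>) * exp (- z\<^sup>2 / 2))"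
      by (simp add: exp_add[symmetric])
    also have "\<dots> \<le> 2 / sqrt pi * \<bar>s\<bar> * exp (- z\<^sup>2 / 2) * (B + 1)"
      using B[of z] by (intro mult_left_mono) auto
    finally show ?thesis
      by (simp only: mult_ac)
  qed
  moreover have "0 < 2 / sqrt pi * (B + 1)"
  proof -
    have "0 \<le> (\<Sum>(q, j)\<leftarrow>xs. \<bar>poly q 0\<bar>) * exp (- 0\<^sup>2 / 2)"
      by (intro mult_nonneg_nonneg sum_list_nonneg) auto
    then show ?thesis
      using B[of 0] by simp
  qed
  ultimately show ?thesis
    by blast
qed

lemma higher_deriv_affine_rescale:
  fixes F :: "nat \<Rightarrow> real \<Rightarrow> real"
  assumes F: "\<And>k z. (F k has_real_derivative F (Suc k) z) (at z)" and L: "L \<noteq> 0"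
  shows "(deriv ^^ k) (\<lambda>y. A * F 0 ((y + b) / L)) = (\<lambda>y. A / L ^ k * F k ((y + b) / L))"
proof (induction k)
  case 0
  show ?case
    by simp
next
  case (Suc k)
  have "((\<lambda>y. A / L ^ k * F k ((y + b) / L)) has_real_derivative A / L ^ Suc k * F (Suc k) ((y + b) / L)) (at y)"
    for y
  proof -
    have "((\<lambda>y. (y + b) / L) has_real_derivative 1 / L) (at y)"
      using L by (auto intro!: derivative_eq_intros)
    from DERIV_chain2[OF F this]
    have "((\<lambda>y. A / L ^ k * F k ((y + b) / L)) has_real_derivative
        A / L ^ k * (F (Suc k) ((y + b) / L) * (1 / L))) (at y)"
      by (rule DERIV_cmult)
    then show ?thesis
      using L by (simp add: field_simps)
  qed
  then have "deriv (\<lambda>y. A / L ^ k * F k ((y + b) / L)) = (\<lambda>y. A / L ^ Suc k * F (Suc k) ((y + b) / L))"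
    by (intro ext DERIV_imp_deriv)
  then show ?case
    using Suc.IH by simp
qed

lemma Lp_norm_rescaled_gaussian_bounded:
  fixes g :: "real \<Rightarrow> real"
  assumes g: "g \<in> borel_measurable borel" and bound: "\<And>z. \<bar>g z\<bar> \<le> c * exp (- z\<^sup>2 / 2)"
    and L: "0 < L" and p: "1 \<le> p"
  shows "integrable lborel (\<lambda>y. \<bar>D * g ((y + b) / L)\<bar> powr p) \<and>
    (\<integral>y. \<bar>D * g ((y + b) / L)\<bar> powr p \<partial>lborel) powr (1 / p)
      \<le> \<bar>D\<bar> * L powr (1 / p) * c * sqrt (2 * pi) powr (1 / p)"
proof -
  define h where "h z = \<bar>g z\<bar> powr p" for z
  have c: "0 \<le> c"
    using bound[of 0] abs_ge_zero[of "g 0"] by simp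
  have h_le: "h z \<le> c powr p * exp (- z\<^sup>2 / 2)" for z
  proof -
    have "h z \<le> (c * exp (- z\<^sup>2 / 2)) powr p"
      unfolding h_def using bound p by (intro powr_mono2) auto
    also have "\<dots> = c powr p * exp (- z\<^sup>2 / 2 * p)"
      using c by (simp add: powr_mult exp_powr_real)
    also have "\<dots> \<le> c powr p * exp (- z\<^sup>2 / 2)"
      using p by (intro mult_left_mono) (auto simp: mult_le_cancel_left1)
    finally show ?thesis .
  qed
  have h_meas: "h \<in> borel_measurable lborel"
    unfolding h_def using g by measurable
  have "norm (h z) \<le> norm (c powr p * exp (- z\<^sup>2 / 2))" for z
    using h_le[of z] abs_ge_self[of "c powr p * exp (- z\<^sup>2 / 2)"] by (simp add: h_def)
  then have h_int: "integrable lborel h"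
    by (intro Bochner_Integration.integrable_bound[OF integrable_mult_right[OF integrable_exp_neg_square_half] h_meas] AE_I2)
  have "(\<integral>z. h z \<partial>lborel) \<le> (\<integral>z. c powr p * exp (- z\<^sup>2 / 2) \<partial>lborel)"
    by (intro integral_mono h_int integrable_mult_right integrable_exp_neg_square_half h_le)
  then have h_integral: "(\<integral>z. h z \<partial>lborel) \<le> c powr p * sqrt (2 * pi)"
    using integral_exp_neg_square_half by simp
  have rescale: "(\<lambda>y. \<bar>D * g ((y + b) / L)\<bar> powr p) = (\<lambda>y. \<bar>D\<bar> powr p * h (b / L + 1 / L * y))"
    by (auto simp: fun_eq_iff h_def abs_mult powr_mult add_divide_distrib add.commute)
  have L': "1 / L \<noteq> 0"
    using L by simp
  have int: "integrable lborel (\<lambda>y. \<bar>D * g ((y + b) / L)\<bar> powr p)"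
    unfolding rescale using lborel_integrable_real_affine[OF h_int L'] by simp
  have "(\<integral>y. \<bar>D * g ((y + b) / L)\<bar> powr p \<partial>lborel) = \<bar>D\<bar> powr p * L * (\<integral>z. h z \<partial>lborel)"
    unfolding rescale using lborel_integral_real_affine[OF L', of h "b / L"] L by simp
  also have "\<dots> \<le> \<bar>D\<bar> powr p * L * (c powr p * sqrt (2 * pi))"
    using L h_integral by (intro mult_left_mono) auto
  finally have "(\<integral>y. \<bar>D * g ((y + b) / L)\<bar> powr p \<partial>lborel) powr (1 / p)
      \<le> (\<bar>D\<bar> powr p * L * (c powr p * sqrt (2 * pi))) powr (1 / p)"
    using p by (intro powr_mono2) auto
  also have "\<dots> = \<bar>D\<bar> * L powr (1 / p) * c * sqrt (2 * pi) powr (1 / p)"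
    using p c L by (simp add: powr_mult powr_powr)
  finally show ?thesis
    using int by blast
qed

lemma abs_exp_minus_one_le:
  fixes x :: real
  assumes "\<bar>x\<bar> \<le> 1/2"
  shows "\<bar>exp x - 1\<bar> \<le> 2 * \<bar>x\<bar>"
proof -
  have "exp x \<le> 1 + 2 * \<bar>x\<bar>"
    using exp_bound_lemma[of x] assms by simp
  moreover have "1 + x \<le> exp x"
    by (rule exp_ge_add_one_self)
  ultimately show ?thesis
    by linarith
qed

lemma higher_deriv_theta:
  fixes i :: nat and et m cb t :: real
  assumes "0 < m" "0 \<le> t" "\<bar>exp (et / m) - 1\<bar> \<le> 1/2"
  defines "L \<equiv> sqrt (2 * m * (1 + t))" and "b \<equiv> (if i = 1 then 1 else -1) * cb * (1 + t)"
  shows "(deriv ^^ k) (\<lambda>y. theta i et m cb y t)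
    = (\<lambda>y. m / L ^ Suc k * (deriv ^^ k) (dw_profile (exp (et / m) - 1)) ((y + b) / L))"
proof -
  define F where "F k = (deriv ^^ k) (dw_profile (exp (et / m) - 1))" for k
  have "m / L = m / sqrt m / sqrt (2 * (1 + t))"
    by (simp add: L_def real_sqrt_mult[symmetric] mult_ac)
  also have "\<dots> = sqrt m / sqrt (2 * (1 + t))"
    using assms(1) by (simp only: real_div_sqrt less_imp_le)
  finally have "sqrt m / sqrt (2 * (1 + t)) = m / L" ..
  then have "(\<lambda>y. theta i et m cb y t) = (\<lambda>y. m / L * F 0 ((y + b) / L))"
    by (simp add: fun_eq_iff theta_def Gamma_dw_eq_dw_profile F_def L_def b_def mult.assoc)
  moreover have "(F k has_real_derivative F (Suc k) z) (at z)" for k z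
    unfolding F_def using assms(3) by (rule has_real_derivative_higher_deriv_dw_profile)
  moreover have "L \<noteq> 0"
    using assms(1,2) by (simp add: L_def)
  ultimately show ?thesis
    using higher_deriv_affine_rescale[where F=F and A="m / L" and b=b and L=L] by (simp add: F_def)
qed

lemma rescaling_factor_le:
  fixes m T r :: real
  assumes m: "0 < m" and T: "0 < T" and r: "r \<le> 1/2"
  shows "m / sqrt (2 * m * T) ^ Suc k * (2 * m * T) powr r \<le> m * (m * T) powr (- 1/2 + r - real k / 2)"
proof -
  have x: "0 < 2 * m * T"
    using m T by simp
  have "sqrt (2 * m * T) ^ Suc k = ((2 * m * T) powr (1/2)) ^ Suc k"
    using x by (simp add: powr_half_sqrt)
  also have "\<dots> = ((2 * m * T) powr (1/2)) powr real (Suc k)"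
    by (rule powr_realpow[symmetric]) (use m T in simp)
  also have "\<dots> = (2 * m * T) powr (real (Suc k) / 2)"
    by (simp add: powr_powr)
  finally have "m / sqrt (2 * m * T) ^ Suc k * (2 * m * T) powr r
      = m * ((2 * m * T) powr r / (2 * m * T) powr (real (Suc k) / 2))"
    by simp
  also have "\<dots> = m * (2 * m * T) powr (- 1/2 + r - real k / 2)"
  proof -
    have "- 1/2 + r - real k / 2 = r - real (Suc k) / 2"
      by (simp add: field_simps)
    then show ?thesis
      by (simp only: powr_diff)
  qed
  also have "\<dots> \<le> m * (m * T) powr (- 1/2 + r - real k / 2)"
    using m T r by (intro mult_left_mono powr_mono2') auto
  finally show ?thesis .
qed

lemma diffusion_wave_strength_le:
  fixes et m E :: real
  assumes m: "0 < m" and et: "\<bar>et\<bar> \<le> E" and E: "E \<le> m / 4"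
  shows "\<bar>exp (et / m) - 1\<bar> \<le> 1/2" and "m * \<bar>exp (et / m) - 1\<bar> \<le> 2 * E"
proof -
  have "\<bar>et / m\<bar> \<le> E / m"
    using divide_right_mono[OF et, of m] m by simp
  moreover have "E / m \<le> 1/4"
    using divide_right_mono[OF E, of m] m by simp
  ultimately have "\<bar>exp (et / m) - 1\<bar> \<le> 2 * \<bar>et / m\<bar>"
    by (intro abs_exp_minus_one_le) linarith
  with \<open>\<bar>et / m\<bar> \<le> E / m\<close> \<open>E / m \<le> 1/4\<close>
  have bound: "\<bar>exp (et / m) - 1\<bar> \<le> 2 * (E / m)" "2 * (E / m) \<le> 1/2"
    by linarith+
  then show "\<bar>exp (et / m) - 1\<bar> \<le> 1/2"
    by linarith
  have "m * \<bar>exp (et / m) - 1\<bar> \<le> m * (2 * (E / m))"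
    using bound(1) m by (intro mult_left_mono) auto
  then show "m * \<bar>exp (et / m) - 1\<bar> \<le> 2 * E"
    using m by simp
qed

lemma theta_higher_deriv_Lp_bound:
  assumes m: "0 < m" and t: "0 \<le> t" and p: "1 \<le> p" and et: "\<bar>et\<bar> \<le> E" and E: "E \<le> m / 4"
    and K: "\<And>s z. \<bar>s\<bar> \<le> 1/2 \<Longrightarrow> \<bar>(deriv ^^ k) (dw_profile s) z\<bar> \<le> K * \<bar>s\<bar> * exp (- z\<^sup>2 / 2)"
  shows "integrable lborel (\<lambda>y. \<bar>(deriv ^^ k) (\<lambda>y. theta i et m cb y t) y\<bar> powr p) \<and>
    (\<integral>y. \<bar>(deriv ^^ k) (\<lambda>y. theta i et m cb y t) y\<bar> powr p \<partial>lborel) powr (1 / p)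
      \<le> 2 * K * sqrt (2 * pi) powr (1 / p) * E * (m * (1 + t)) powr (- 1/2 + 1 / (2 * p) - real k / 2)"
proof -
  define s where "s = exp (et / m) - 1"
  define L where "L = sqrt (2 * m * (1 + t))"
  define b where "b = (if i = 1 then 1 else -1) * cb * (1 + t)"
  define X where "X = (m * (1 + t)) powr (- 1/2 + 1 / (2 * p) - real k / 2)"
  define J where "J = sqrt (2 * pi) powr (1 / p)"
  have s: "\<bar>s\<bar> \<le> 1/2" "m * \<bar>s\<bar> \<le> 2 * E"
    unfolding s_def using diffusion_wave_strength_le[OF m et E] by auto
  have K0: "0 \<le> K"
    using K[of "1/2" 0] abs_ge_zero[of "(deriv ^^ k) (dw_profile (1/2)) 0"] by simp
  have L: "0 < L"
    using m t by (simp add: L_def)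
  have dk: "(deriv ^^ k) (\<lambda>y. theta i et m cb y t) = (\<lambda>y. m / L ^ Suc k * (deriv ^^ k) (dw_profile s) ((y + b) / L))"
    unfolding s_def L_def b_def using m t s(1) unfolding s_def by (rule higher_deriv_theta)
  have "continuous_on UNIV ((deriv ^^ k) (dw_profile s))"
    using has_real_derivative_higher_deriv_dw_profile[OF s(1)]
    by (intro continuous_at_imp_continuous_on ballI DERIV_isCont) blast
  then have meas: "(deriv ^^ k) (dw_profile s) \<in> borel_measurable borel"
    by (rule borel_measurable_continuous_onI)
  note Lp = Lp_norm_rescaled_gaussian_bounded[OF meas K[OF s(1)] L p, of "m / L ^ Suc k" b]
  have abs_D: "\<bar>m / L ^ Suc k\<bar> = m / L ^ Suc k"
    using m L by simp
  have "1 / (2 * p) \<le> 1/2"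
    using p by (simp add: field_simps)
  then have "m / sqrt (2 * m * (1 + t)) ^ Suc k * (2 * m * (1 + t)) powr (1 / (2 * p)) \<le> m * X"
    unfolding X_def using m t by (intro rescaling_factor_le) auto
  then have factor: "m / L ^ Suc k * L powr (1 / p) \<le> m * X"
    using m t by (simp add: L_def powr_half_sqrt[symmetric] powr_powr)
  have int: "integrable lborel (\<lambda>y. \<bar>(deriv ^^ k) (\<lambda>y. theta i et m cb y t) y\<bar> powr p)"
    unfolding dk using Lp by blast
  have "(\<integral>y. \<bar>(deriv ^^ k) (\<lambda>y. theta i et m cb y t) y\<bar> powr p \<partial>lborel) powr (1 / p)
      \<le> m / L ^ Suc k * L powr (1 / p) * (K * \<bar>s\<bar>) * J"
    unfolding dk J_def using Lp[THEN conjunct2] unfolding abs_D .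
  also have "\<dots> \<le> m * X * (K * \<bar>s\<bar>) * J"
    using K0 by (intro mult_right_mono factor) (auto simp: J_def)
  also have "\<dots> = K * J * X * (m * \<bar>s\<bar>)"
    by (simp add: mult_ac)
  also have "\<dots> \<le> K * J * X * (2 * E)"
    using K0 s(2) by (intro mult_left_mono) (auto simp: J_def X_def)
  also have "\<dots> = 2 * K * J * E * X"
    by (simp add: mult_ac)
  finally show ?thesis
    using int unfolding J_def X_def by blast
qed

lemma theta_higher_deriv_sup_bound:
  assumes m: "0 < m" and t: "0 \<le> t" and et: "\<bar>et\<bar> \<le> E" and E: "E \<le> m / 4"
    and K: "\<And>s z. \<bar>s\<bar> \<le> 1/2 \<Longrightarrow> \<bar>(deriv ^^ k) (dw_profile s) z\<bar> \<le> K * \<bar>s\<bar> * exp (- z\<^sup>2 / 2)"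
  shows "\<bar>(deriv ^^ k) (\<lambda>y. theta i et m cb y t) y\<bar> \<le> 2 * K * E * (m * (1 + t)) powr (- 1/2 - real k / 2)"
proof -
  define s where "s = exp (et / m) - 1"
  define L where "L = sqrt (2 * m * (1 + t))"
  define b where "b = (if i = 1 then 1 else -1) * cb * (1 + t)"
  define X where "X = (m * (1 + t)) powr (- 1/2 - real k / 2)"
  define z where "z = (y + b) / L"
  have s: "\<bar>s\<bar> \<le> 1/2" "m * \<bar>s\<bar> \<le> 2 * E"
    unfolding s_def using diffusion_wave_strength_le[OF m et E] by auto
  have K0: "0 \<le> K"
    using K[of "1/2" 0] abs_ge_zero[of "(deriv ^^ k) (dw_profile (1/2)) 0"] by simp
  have L: "0 < L"
    using m t by (simp add: L_def)
  have dk: "(deriv ^^ k) (\<lambda>y. theta i et m cb y t) = (\<lambda>y. m / L ^ Suc k * (deriv ^^ k) (dw_profile s) ((y + b) / L))"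
    unfolding s_def L_def b_def using m t s(1) unfolding s_def by (rule higher_deriv_theta)
  have "m / sqrt (2 * m * (1 + t)) ^ Suc k * (2 * m * (1 + t)) powr 0 \<le> m * (m * (1 + t)) powr (- 1/2 + 0 - real k / 2)"
    using m t by (intro rescaling_factor_le) auto
  then have factor: "m / L ^ Suc k \<le> m * X"
    using m t by (simp add: L_def X_def)
  have "K * \<bar>s\<bar> * exp (- z\<^sup>2 / 2) \<le> K * \<bar>s\<bar>"
    using K0 by (intro mult_left_le) auto
  then have F: "\<bar>(deriv ^^ k) (dw_profile s) z\<bar> \<le> K * \<bar>s\<bar>"
    using K[OF s(1), of z] by linarith
  have "\<bar>(deriv ^^ k) (\<lambda>y. theta i et m cb y t) y\<bar> = m / L ^ Suc k * \<bar>(deriv ^^ k) (dw_profile s) z\<bar>"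
    unfolding dk z_def using m L by (simp add: abs_mult)
  also have "\<dots> \<le> m / L ^ Suc k * (K * \<bar>s\<bar>)"
    using F m L by (intro mult_left_mono) auto
  also have "\<dots> \<le> m * X * (K * \<bar>s\<bar>)"
    using K0 by (intro mult_right_mono factor) auto
  also have "\<dots> = K * X * (m * \<bar>s\<bar>)"
    by (simp add: mult_ac)
  also have "\<dots> \<le> K * X * (2 * E)"
    using K0 s(2) by (intro mult_left_mono) (auto simp: X_def)
  finally show ?thesis
    by (simp add: X_def mult_ac)
qed

lemma L1_TR_nonneg: "0 \<le> L1_TR f"
  unfolding L1_TR_def set_lebesgue_integral_def by (intro integral_nonneg_AE) auto

lemma abs_total_mass_le_L1_TR:
  assumes "set_integrable lborel ({0..1::real} \<times> UNIV) (\<lambda>z. f (fst z) (snd z))"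
  shows "\<bar>total_mass f\<bar> \<le> L1_TR f"
proof -
  define h where "h x y = indicator {0..1::real} x * f x y" for x y
  have "(\<lambda>z::real \<times> real. indicator ({0..1} \<times> UNIV) z *\<^sub>R f (fst z) (snd z)) = case_prod h"
    by (auto simp: h_def fun_eq_iff indicator_def)
  then have int: "integrable (lborel \<Otimes>\<^sub>M lborel) (case_prod h)"
    using assms unfolding set_integrable_def lborel_prod by simp
  have "total_mass f = (\<integral>y. (\<integral>x. h x y \<partial>lborel) \<partial>lborel)"
    unfolding total_mass_def zero_mode_def set_lebesgue_integral_def h_def by simp
  also have "\<dots> = (\<integral>z. case_prod h z \<partial>(lborel \<Otimes>\<^sub>M lborel))"
    by (rule lborel_pair.integral_snd[OF int])
  finally have "\<bar>total_mass f\<bar> \<le> (\<integral>z. \<bar>case_prod h z\<bar> \<partial>(lborel \<Otimes>\<^sub>M lborel))"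
    using integral_abs_bound by metis
  also have "\<dots> = L1_TR f"
    unfolding L1_TR_def set_lebesgue_integral_def lborel_prod
    by (intro Bochner_Integration.integral_cong) (auto simp: h_def indicator_def)
  finally show ?thesis .
qed

lemma abs_eta_le_L1_TR:
  assumes M: "0 < M"
    and "set_integrable lborel ({0..1} \<times> UNIV) (\<lambda>z. \<phi>0 (fst z) (snd z))"
    and "set_integrable lborel ({0..1} \<times> UNIV) (\<lambda>z. w0 (fst z) (snd z))"
  shows "\<bar>eta i a (1 / M) (total_mass \<phi>0) (total_mass w0)\<bar> \<le> \<bar>1 / (2 * a)\<bar> * (1 + M) * (L1_TR \<phi>0 + L1_TR w0)"
proof -
  have \<phi>: "\<bar>total_mass \<phi>0\<bar> \<le> L1_TR \<phi>0"
    using assms(2) by (rule abs_total_mass_le_L1_TR)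
  have w: "\<bar>total_mass w0\<bar> \<le> L1_TR w0"
    using assms(3) by (rule abs_total_mass_le_L1_TR)
  have "\<bar>(if i = 1 then - total_mass \<phi>0 else total_mass \<phi>0) + total_mass w0 * M\<bar>
      \<le> \<bar>total_mass \<phi>0\<bar> + M * \<bar>total_mass w0\<bar>"
    using abs_triangle_ineq[of "- total_mass \<phi>0" "total_mass w0 * M"]
      abs_triangle_ineq[of "total_mass \<phi>0" "total_mass w0 * M"] M
    by (auto simp: abs_mult mult.commute)
  also have "\<dots> \<le> L1_TR \<phi>0 + M * L1_TR w0"
    using \<phi> mult_left_mono[OF w, of M] M by linarith
  also have "\<dots> \<le> (1 + M) * (L1_TR \<phi>0 + L1_TR w0)"
  proof -
    have "0 \<le> L1_TR w0 + M * L1_TR \<phi>0"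
      using M by (intro add_nonneg_nonneg mult_nonneg_nonneg L1_TR_nonneg) auto
    then show ?thesis
      unfolding distrib_left distrib_right by linarith
  qed
  finally have masses: "\<bar>(if i = 1 then - total_mass \<phi>0 else total_mass \<phi>0) + total_mass w0 * M\<bar>
      \<le> (1 + M) * (L1_TR \<phi>0 + L1_TR w0)" .
  have "\<bar>eta i a (1 / M) (total_mass \<phi>0) (total_mass w0)\<bar>
      = \<bar>1 / (2 * a)\<bar> * \<bar>(if i = 1 then - total_mass \<phi>0 else total_mass \<phi>0) + total_mass w0 * M\<bar>"
    by (simp add: eta_def abs_mult)
  also have "\<dots> \<le> \<bar>1 / (2 * a)\<bar> * ((1 + M) * (L1_TR \<phi>0 + L1_TR w0))"
    using masses by (rule mult_left_mono) simp
  finally show ?thesis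
    by (simp add: mult.assoc)
qed

lemma eta_bound_for_small_viscosity:
  fixes \<mu> lam C \<alpha> c a :: real
  assumes M: "0 < M" and K1: "0 < K1" and \<mu>: "0 < \<mu>" and lam: "K1 * \<mu> \<le> lam + \<mu>"
    and \<phi>: "set_integrable lborel ({0..1} \<times> UNIV) (\<lambda>z. \<phi> (fst z) (snd z))"
    and w: "set_integrable lborel ({0..1} \<times> UNIV) (\<lambda>z. w (fst z) (snd z))"
    and L1: "L1_TR \<phi> + L1_TR w \<le> C * \<mu> powr \<alpha>"
    and c: "\<bar>1 / (2 * a)\<bar> * (1 + M) * C \<le> c" and small: "c * \<mu> powr \<alpha> \<le> \<mu> / 4"
  shows "\<bar>eta i a (1 / M) (total_mass \<phi>) (total_mass w)\<bar> \<le> c * \<mu> powr \<alpha>"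
    and "c * \<mu> powr \<alpha> \<le> (2 * \<mu> + lam) / 4" and "0 < 2 * \<mu> + lam"
proof -
  have "\<bar>eta i a (1 / M) (total_mass \<phi>) (total_mass w)\<bar> \<le> \<bar>1 / (2 * a)\<bar> * (1 + M) * (L1_TR \<phi> + L1_TR w)"
    by (rule abs_eta_le_L1_TR[OF M \<phi> w])
  also have "\<dots> \<le> \<bar>1 / (2 * a)\<bar> * (1 + M) * (C * \<mu> powr \<alpha>)"
    using L1 M by (intro mult_left_mono) auto
  also have "\<dots> \<le> c * \<mu> powr \<alpha>"
    using mult_right_mono[OF c, of "\<mu> powr \<alpha>"] by (simp add: mult.assoc)
  finally show "\<bar>eta i a (1 / M) (total_mass \<phi>) (total_mass w)\<bar> \<le> c * \<mu> powr \<alpha>" .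
  have "\<mu> \<le> 2 * \<mu> + lam"
    using \<mu> lam mult_pos_pos[OF K1 \<mu>] by linarith
  then show "c * \<mu> powr \<alpha> \<le> (2 * \<mu> + lam) / 4" "0 < 2 * \<mu> + lam"
    using small \<mu> by auto
qed

lemma small_powr_le_linear:
  fixes c \<alpha> :: real
  assumes c: "0 < c" and \<alpha>: "1 < \<alpha>"
  obtains \<mu>0 where "0 < \<mu>0" and "\<And>\<mu>. 0 < \<mu> \<Longrightarrow> \<mu> \<le> \<mu>0 \<Longrightarrow> c * \<mu> powr \<alpha> \<le> \<mu> / 4"
proof -
  define \<mu>0 where "\<mu>0 = (1 / (4 * c)) powr (1 / (\<alpha> - 1))"
  have "c * \<mu> powr \<alpha> \<le> \<mu> / 4" if "0 < \<mu>" "\<mu> \<le> \<mu>0" for \<mu>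
  proof -
    have "\<mu> powr (\<alpha> - 1) \<le> \<mu>0 powr (\<alpha> - 1)"
      using that \<alpha> by (intro powr_mono2) auto
    also have "\<dots> = 1 / (4 * c)"
      unfolding \<mu>0_def using \<alpha> c by (simp add: powr_powr)
    finally have "c * (\<mu> * \<mu> powr (\<alpha> - 1)) \<le> c * (\<mu> * (1 / (4 * c)))"
      using that c by (intro mult_left_mono) auto
    then show ?thesis
      using that c by (simp add: powr_mult_base)
  qed
  moreover have "0 < \<mu>0"
    using c by (simp add: \<mu>0_def)
  ultimately show ?thesis
    using that by blast
qed

theorem mainTheorem3:
  fixes M C \<alpha> K1 K2 :: real and P :: "real \<Rightarrow> real"
  assumes "M > 0" and "C > 0" and "\<alpha> > 11/3"
    and "0 < K1" and "K1 \<le> K2"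
    and "\<forall>n. \<forall>x>0. (deriv ^^ n) P differentiable (at x)"
    and "deriv P 1 = 1"
  shows "\<exists>\<mu>0>0. \<forall>k::nat.
    (\<forall>p::real. p \<ge> 1 \<longrightarrow>
      (\<exists>C'>0. \<forall>\<mu> lam (\<phi>0 :: real \<Rightarrow> real \<Rightarrow> real) (w0 :: real \<Rightarrow> real \<Rightarrow> real) t i.
        0 < \<mu> \<and> \<mu> \<le> \<mu>0 \<and> K1 * \<mu> \<le> lam + \<mu> \<and> lam + \<mu> \<le> K2 * \<mu> \<and>
        (\<forall>x y. \<phi>0 (x + 1) y = \<phi>0 x y \<and> w0 (x + 1) y = w0 x y) \<and>
        set_integrable lborel ({0..1} \<times> UNIV) (\<lambda>z. \<phi>0 (fst z) (snd z)) \<and>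
        set_integrable lborel ({0..1} \<times> UNIV) (\<lambda>z. w0 (fst z) (snd z)) \<and>
        L1_TR \<phi>0 + L1_TR w0 \<le> C * \<mu> powr \<alpha> \<and>
        t \<ge> 0 \<and> i \<in> {1, 2::nat} \<longrightarrow>
        (let mubar = 2 * \<mu> + lam; cbar = 1 / M;
             et = eta i (a_const ((deriv ^^ 2) P 1) cbar) cbar (total_mass \<phi>0) (total_mass w0);
             f = (deriv ^^ k) (\<lambda>y. theta i et mubar cbar y t)
         in integrable lborel (\<lambda>y. \<bar>f y\<bar> powr p) \<and>
            (LINT y|lborel. \<bar>f y\<bar> powr p) powr (1 / p)
              \<le> C' * \<mu> powr \<alpha> * (mubar * (1 + t)) powr (- 1/2 + 1 / (2 * p) - real k / 2)))) \<and>
    (\<exists>C'>0. \<forall>\<mu> lam (\<phi>0 :: real \<Rightarrow> real \<Rightarrow> real) (w0 :: real \<Rightarrow> real \<Rightarrow> real) t i.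
        0 < \<mu> \<and> \<mu> \<le> \<mu>0 \<and> K1 * \<mu> \<le> lam + \<mu> \<and> lam + \<mu> \<le> K2 * \<mu> \<and>
        (\<forall>x y. \<phi>0 (x + 1) y = \<phi>0 x y \<and> w0 (x + 1) y = w0 x y) \<and>
        set_integrable lborel ({0..1} \<times> UNIV) (\<lambda>z. \<phi>0 (fst z) (snd z)) \<and>
        set_integrable lborel ({0..1} \<times> UNIV) (\<lambda>z. w0 (fst z) (snd z)) \<and>
        L1_TR \<phi>0 + L1_TR w0 \<le> C * \<mu> powr \<alpha> \<and>
        t \<ge> 0 \<and> i \<in> {1, 2::nat} \<longrightarrow>
        (let mubar = 2 * \<mu> + lam; cbar = 1 / M;
             et = eta i (a_const ((deriv ^^ 2) P 1) cbar) cbar (total_mass \<phi>0) (total_mass w0)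
         in \<forall>y. \<bar>(deriv ^^ k) (\<lambda>y. theta i et mubar cbar y t) y\<bar>
              \<le> C' * \<mu> powr \<alpha> * (mubar * (1 + t)) powr (- 1/2 - real k / 2)))"
proof -
  \<comment> \<open>Only the lower bound \<open>K1 \<mu> \<le> lam + \<mu>\<close> is used: the estimate holds for every value of
    \<open>a_const\<close>, so periodicity, the upper bound \<open>K2\<close> and the hypotheses on \<open>P\<close> play no role.\<close>
  let ?a = "a_const ((deriv ^^ 2) P 1) (1 / M)"
  define c where "c = \<bar>1 / (2 * ?a)\<bar> * (1 + M) * C + 1"
  have "0 < c"
    unfolding c_def using assms(1,2) by (intro add_nonneg_pos mult_nonneg_nonneg) auto
  moreover have "1 < \<alpha>"
    using assms(3) by simp
  ultimately obtain \<mu>0 where "0 < \<mu>0" and small: "\<And>\<mu>. 0 < \<mu> \<Longrightarrow> \<mu> \<le> \<mu>0 \<Longrightarrow> c * \<mu> powr \<alpha> \<le> \<mu> / 4"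
    by (rule small_powr_le_linear) blast
  have "\<bar>1 / (2 * ?a)\<bar> * (1 + M) * C \<le> c"
    by (simp add: c_def)
  note eta_bound = eta_bound_for_small_viscosity[OF assms(1,4) _ _ _ _ _ this small]
  obtain K where K: "\<And>k. 0 < K k"
    "\<And>k s z. \<bar>s\<bar> \<le> 1/2 \<Longrightarrow> \<bar>(deriv ^^ k) (dw_profile s) z\<bar> \<le> K k * \<bar>s\<bar> * exp (- z\<^sup>2 / 2)"
    using higher_deriv_dw_profile_bound by metis
  show ?thesis
    apply (rule exI[of _ \<mu>0], intro conjI allI impI \<open>0 < \<mu>0\<close>)
    subgoal for k p
      apply (rule exI[of _ "2 * K k * sqrt (2 * pi) powr (1 / p) * c"], intro conjI allI impI)
      subgoal
        using K(1) \<open>0 < c\<close> by simp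
      subgoal for \<mu> lam \<phi>0 w0 t i
        using eta_bound[where \<mu> = \<mu> and lam = lam and \<phi> = \<phi>0 and w = w0]
          theta_higher_deriv_Lp_bound[OF _ _ _ _ _ K(2), where m = "2 * \<mu> + lam" and t = t and p = p
            and E = "c * \<mu> powr \<alpha>" and i = i and cb = "1 / M"
            and et = "eta i ?a (1 / M) (total_mass \<phi>0) (total_mass w0)"]
        by (auto simp: Let_def mult.assoc)
      done
    subgoal for k
      apply (rule exI[of _ "2 * K k * c"], intro conjI allI impI)
      subgoal
        using K(1) \<open>0 < c\<close> by simp
      subgoal for \<mu> lam \<phi>0 w0 t i
        using eta_bound[where \<mu> = \<mu> and lam = lam and \<phi> = \<phi>0 and w = w0]
          theta_higher_deriv_sup_bound[OF _ _ _ _ K(2), where m = "2 * \<mu> + lam" and t = t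
            and E = "c * \<mu> powr \<alpha>" and i = i and cb = "1 / M"
            and et = "eta i ?a (1 / M) (total_mass \<phi>0) (total_mass w0)"]
        by (auto simp: Let_def mult.assoc)
      done
    done
qed

end
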